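(* Let $(\mathcal{L},\mathcal{D}(\mathcal{L}))$ be the generator of a $C_0$-contraction semigroup on a Banach space $\mathcal{X}$, $M\in\mathcal{B}(\mathcal{X})$ a contraction, and $P$ a projection with $\|M^n-P\|_\infty\le\delta^n$ for some $\delta\in(0,1)$ and all $n\in\mathbb{N}$. Assume there is $b\ge0$ such that $\|Pe^{t\mathcal{L}}(\mathbf{1}-P)\|_\infty\le tb$ and $\|(\mathbf{1}-P)e^{t\mathcal{L}}P\|_\infty\le tb$ for all $t\ge0$, and that $(P\mathcal{L}P,\mathcal{D}(\mathcal{L}P))$ is the generator of a $C_0$-semigroup. Then for all $n\in\mathbb{N}$ and all $x\in\mathcal{X}$ $$\Big\|\big(Me^{\frac1n\mathcal{L}}\big)^nx-\big(Pe^{\frac1n\mathcal{L}}P\big)^nx\Big\|\le\Big(\delta^n+\frac bn+\frac1n\,\frac{b(2+b)(\delta-\delta^n)}{1-\delta}e^{2b}\Big)\|x\|.$$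
   Context: $\mathcal{B}(\mathcal{X})$: bounded operators with operator norm $\|\cdot\|_\infty$; $\mathbf{1}$ the identity; contraction: norm at most $1$; projection: bounded idempotent. A $C_0$-contraction semigroup is a strongly continuous semigroup of contractions, denoted $e^{t\mathcal{L}}$ by its generator. $\mathcal{D}(\mathcal{L}P)=\{x:Px\in\mathcal{D}(\mathcal{L})\}$. *)

theory Defs
  imports "HOL-Analysis.Analysis"
begin

fun blpow :: "('a::real_normed_vector \<Rightarrow>\<^sub>L 'a) \<Rightarrow> nat \<Rightarrow> ('a \<Rightarrow>\<^sub>L 'a)" where
  "blpow A 0 = id_blinfun"
| "blpow A (Suc n) = A o\<^sub>L blpow A n"

text \<open>Strongly continuous (C_0) semigroup of bounded operators, indexed by t \<ge> 0
  (values at negative times are irrelevant).\<close>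
definition C0_semigroup :: "(real \<Rightarrow> ('a::real_normed_vector \<Rightarrow>\<^sub>L 'a)) \<Rightarrow> bool" where
  "C0_semigroup T \<longleftrightarrow>
     T 0 = id_blinfun \<and>
     (\<forall>s\<ge>0. \<forall>t\<ge>0. T (s + t) = T s o\<^sub>L T t) \<and>
     (\<forall>x. ((\<lambda>t. T t x) \<longlongrightarrow> x) (at_right 0))"

definition C0_contraction_semigroup :: "(real \<Rightarrow> ('a::real_normed_vector \<Rightarrow>\<^sub>L 'a)) \<Rightarrow> bool" where
  "C0_contraction_semigroup T \<longleftrightarrow> C0_semigroup T \<and> (\<forall>t\<ge>0. norm (T t) \<le> 1)"

definition is_generator ::
  "(real \<Rightarrow> ('a::real_normed_vector \<Rightarrow>\<^sub>L 'a)) \<Rightarrow> 'a set \<Rightarrow> ('a \<Rightarrow> 'a) \<Rightarrow> bool" where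
  "is_generator T D L \<longleftrightarrow>
     D = {x. \<exists>y. ((\<lambda>h. (1 / h) *\<^sub>R (T h x - x)) \<longlongrightarrow> y) (at_right 0)} \<and>
     (\<forall>x\<in>D. ((\<lambda>h. (1 / h) *\<^sub>R (T h x - x)) \<longlongrightarrow> L x) (at_right 0))"

end

theory Submission
  imports Defs
begin

text \<open>Write \<open>x\<^sub>k = (M e\<^bsup>L/n\<^esup>)\<^sup>k x\<close> and split it into its \<open>P\<close>-part and its \<open>(1 - P)\<close>-part.
  The geometric convergence forces \<open>M P = P M = P\<close>, so \<open>M - P\<close> kills the range of \<open>P\<close> and has
  norm at most \<open>\<delta>\<close>: per step the complement part shrinks by \<open>\<delta>\<close> up to the leakage \<open>b/n\<close> out of
  the range of \<open>P\<close>, whence \<open>\<parallel>(1 - P) x\<^sub>k\<parallel> \<le> (\<delta>\<^sup>k + (b/n)(\<delta> + \<dots> + \<delta>\<^bsup>k-1\<^esup>)) \<parallel>x\<parallel>\<close>. The \<open>P\<close>-part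
  follows the compressed evolution \<open>P e\<^bsup>L/n\<^esup> P\<close> up to the leakage \<open>(b/n) \<parallel>(1 - P) x\<^sub>k\<parallel>\<close>
  back into the range, and summing these errors gives the bound, even with \<open>2 + b\<close> in place of
  \<open>(2 + b) exp (2 b)\<close>.\<close>

lemma blpow_Suc_right: "blpow A (Suc n) = blpow A n o\<^sub>L A"
proof (rule blinfun_eqI)
  show "blpow A (Suc n) x = (blpow A n o\<^sub>L A) x" for x
    by (induction n) simp_all
qed

lemma blpow_one [simp]: "blpow A 1 = A"
  by (rule blinfun_eqI) simp

lemma norm_blpow_le: "norm (blpow A n) \<le> norm A ^ n"
proof (induction n)
  case 0
  show ?case by (simp add: norm_blinfun_id_le)
next
  case (Suc n)
  have "norm (blpow A (Suc n)) \<le> norm A * norm (blpow A n)"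
    by (simp add: norm_blinfun_compose)
  also have "\<dots> \<le> norm A * norm A ^ n"
    using Suc.IH by (simp add: mult_left_mono)
  finally show ?case by simp
qed

lemma norm_blpow_apply_le:
  assumes "norm A \<le> 1"
  shows "norm (blpow A n x) \<le> norm x"
proof -
  have "norm (blpow A n x) \<le> norm A ^ n * norm x"
    using norm_blinfun[of "blpow A n" x] norm_blpow_le[of A n] by (simp add: order_trans mult_right_mono)
  also have "\<dots> \<le> norm x"
    using assms by (simp add: mult_left_le_one_le power_le_one)
  finally show ?thesis .
qed

lemma blpow_tendsto_of_geometric:
  assumes "\<delta> < 1" and geom: "\<And>n. 1 \<le> n \<Longrightarrow> norm (blpow M n - P) \<le> \<delta> ^ n"
  shows "blpow M \<longlonglongrightarrow> P"
proof -
  have "norm (blpow M 1 - P) \<le> \<delta>"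
    using geom[of 1] by simp
  then have "\<bar>\<delta>\<bar> < 1"
    using assms(1) norm_ge_zero[of "blpow M 1 - P"] by linarith
  then have "(\<lambda>n. \<delta> ^ n) \<longlonglongrightarrow> 0"
    by (simp add: LIMSEQ_power_zero)
  moreover have "\<forall>\<^sub>F n in sequentially. norm (blpow M n - P) \<le> \<delta> ^ n"
    unfolding eventually_sequentially using geom by blast
  ultimately have "(\<lambda>n. blpow M n - P) \<longlonglongrightarrow> 0"
    by (rule Lim_null_comparison[rotated])
  then show ?thesis
    by (simp only: LIM_zero_iff)
qed

lemma blpow_limit_absorbs:
  assumes lim: "blpow M \<longlonglongrightarrow> P"
  shows "M o\<^sub>L P = P" and "P o\<^sub>L M = P"
proof -
  have Suc_lim: "(\<lambda>n. blpow M (Suc n)) \<longlonglongrightarrow> P"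
    using lim by (rule LIMSEQ_Suc)
  have "(\<lambda>n. M o\<^sub>L blpow M n) \<longlonglongrightarrow> (M o\<^sub>L P)"
    using bounded_bilinear.tendsto[OF bounded_bilinear_blinfun_compose tendsto_const lim] .
  from LIMSEQ_unique[OF this Suc_lim[unfolded blpow.simps]] show "M o\<^sub>L P = P" .
  have "(\<lambda>n. blpow M n o\<^sub>L M) \<longlonglongrightarrow> (P o\<^sub>L M)"
    using bounded_bilinear.tendsto[OF bounded_bilinear_blinfun_compose lim tendsto_const] .
  from LIMSEQ_unique[OF this Suc_lim[unfolded blpow_Suc_right]] show "P o\<^sub>L M = P" .
qed

lemma norm_blpow_limit_le:
  assumes "blpow M \<longlonglongrightarrow> P" and "norm M \<le> 1"
  shows "norm P \<le> 1"
proof -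
  have bound: "norm (blpow M n) \<le> 1" for n
    using norm_blpow_le[of M n] assms(2) by (simp add: order_trans power_le_one)
  show ?thesis
    using tendsto_norm[OF assms(1)] by (rule LIMSEQ_le_const2) (use bound in blast)
qed

lemma norm_blinfun_apply_le_mult:
  fixes F :: "'a::real_normed_vector \<Rightarrow>\<^sub>L 'b::real_normed_vector"
  assumes "norm F \<le> c" and "norm y \<le> w"
  shows "norm (F y) \<le> c * w"
proof -
  have "norm (F y) \<le> norm F * norm y"
    by (rule norm_blinfun)
  also have "\<dots> \<le> c * w"
    using assms by (intro mult_mono) (auto intro: order_trans[OF norm_ge_zero])
  finally show ?thesis .
qed

lemma sum_power_from_one_Suc:
  fixes x :: "'a::comm_ring_1"
  assumes "1 \<le> k"
  shows "(\<Sum>j=1..<Suc k. x ^ j) = x + x * (\<Sum>j=1..<k. x ^ j)"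
  using assms
proof (induction k rule: dec_induct)
  case base
  show ?case by simp
next
  case (step m)
  have "(\<Sum>j=1..<Suc (Suc m). x ^ j) = (\<Sum>j=1..<Suc m. x ^ j) + x ^ Suc m"
    using step.hyps by simp
  also have "\<dots> = x + x * ((\<Sum>j=1..<m. x ^ j) + x ^ m)"
    using step.IH by (simp add: algebra_simps)
  also have "\<dots> = x + x * (\<Sum>j=1..<Suc m. x ^ j)"
    using step.hyps by simp
  finally show ?case .
qed

lemma sum_power_from_one_closed_form:
  fixes x :: "'a::field"
  assumes "x \<noteq> 1" and "1 \<le> k"
  shows "(\<Sum>j=1..<k. x ^ j) = (x - x ^ k) / (1 - x)"
proof -
  from assms(2) obtain m where "k = Suc m"
    by (cases k) auto
  then show ?thesis
    using assms(1) by (simp add: atLeastLessThanSuc_atLeastAtMost sum_gp)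
qed

text \<open>One step \<open>M T\<close> of the Zeno product, with \<open>T = e\<^bsup>tL\<^esup>\<close> and \<open>e = t b\<close>.\<close>
locale zeno_step =
  fixes M P T :: "'a::real_normed_vector \<Rightarrow>\<^sub>L 'a" and \<delta> e :: real
  assumes P_idem: "P o\<^sub>L P = P"
    and M_P: "M o\<^sub>L P = P"
    and P_M: "P o\<^sub>L M = P"
    and norm_P: "norm P \<le> 1"
    and norm_M: "norm M \<le> 1"
    and norm_T: "norm T \<le> 1"
    and norm_M_minus_P: "norm (M - P) \<le> \<delta>"
    and norm_P_T_complement: "norm (P o\<^sub>L T o\<^sub>L (id_blinfun - P)) \<le> e"
    and norm_complement_T_P: "norm ((id_blinfun - P) o\<^sub>L T o\<^sub>L P) \<le> e"
begin

lemma P_P_apply [simp]: "P (P y) = P y"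
  using P_idem by (metis blinfun_apply_blinfun_compose)

lemma M_P_apply [simp]: "M (P y) = P y"
  using M_P by (metis blinfun_apply_blinfun_compose)

lemma P_M_apply [simp]: "P (M y) = P y"
  using P_M by (metis blinfun_apply_blinfun_compose)

lemma delta_nonneg: "0 \<le> \<delta>"
  using norm_M_minus_P norm_ge_zero order_trans by blast

lemma e_nonneg: "0 \<le> e"
  using norm_P_T_complement norm_ge_zero order_trans by blast

lemma norm_step_le: "norm (M o\<^sub>L T) \<le> 1"
  using norm_blinfun_compose[of M T] norm_M norm_T
  by (meson mult_le_one norm_ge_zero order_trans)

lemma norm_compressed_le: "norm (P o\<^sub>L T o\<^sub>L P) \<le> 1"
  using norm_blinfun_compose[of "P o\<^sub>L T" P] norm_blinfun_compose[of P T] norm_P norm_T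
  by (meson mult_le_one norm_ge_zero order_trans)

lemma norm_P_T_complement_apply: "norm (P (T (y - P y))) \<le> e * norm y"
  using norm_blinfun_apply_le_mult[OF norm_P_T_complement order_refl, of y]
  by (simp add: blinfun.diff_left)

lemma norm_complement_T_P_apply: "norm (T (P y) - P (T (P y))) \<le> e * norm y"
  using norm_blinfun_apply_le_mult[OF norm_complement_T_P order_refl, of y]
  by (simp add: blinfun.diff_left)

lemma norm_complement_step_le: "norm (M (T y) - P (M (T y))) \<le> \<delta> * norm y"
  using norm_blinfun_apply_le_mult[OF norm_M_minus_P norm_blinfun_apply_le_mult[OF norm_T order_refl]]
  by (simp add: blinfun.diff_left)

text \<open>Since \<open>M - P\<close> vanishes on the range of \<open>P\<close>, only the off-diagonal part of \<open>T y\<close>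
  and the complement part of \<open>y\<close> contribute.\<close>
lemma norm_complement_step:
  "norm (M (T y) - P (M (T y))) \<le> \<delta> * e * norm y + \<delta> * norm (y - P y)"
proof -
  have "M (T y) - P (M (T y)) = (M - P) (T (P y) - P (T (P y))) + (M - P) (T (y - P y))"
    by (simp add: blinfun.diff_left blinfun.diff_right)
  also have "norm \<dots> \<le> \<delta> * (e * norm y) + \<delta> * (1 * norm (y - P y))"
    by (intro norm_triangle_le add_mono norm_blinfun_apply_le_mult norm_M_minus_P
        norm_complement_T_P_apply norm_T order_refl)
  finally show ?thesis
    by (simp add: mult.assoc)
qed

lemma P_step: "P (M (T y)) = (P o\<^sub>L T o\<^sub>L P) (P y) + P (T (y - P y))"
  by (simp add: blinfun.diff_right)

lemma norm_complement_iterate: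
  assumes "1 \<le> k"
  shows "norm (blpow (M o\<^sub>L T) k x - P (blpow (M o\<^sub>L T) k x))
    \<le> (\<delta> ^ k + e * (\<Sum>j=1..<k. \<delta> ^ j)) * norm x"
  using assms
proof (induction k rule: dec_induct)
  case base
  show ?case
    using norm_complement_step_le[of x] by simp
next
  case (step k)
  let ?y = "blpow (M o\<^sub>L T) k x"
  have "norm (blpow (M o\<^sub>L T) (Suc k) x - P (blpow (M o\<^sub>L T) (Suc k) x))
      \<le> \<delta> * e * norm ?y + \<delta> * norm (?y - P ?y)"
    using norm_complement_step[of ?y] by simp
  also have "\<dots> \<le> \<delta> * e * norm x + \<delta> * ((\<delta> ^ k + e * (\<Sum>j=1..<k. \<delta> ^ j)) * norm x)"
    using step.IH norm_blpow_apply_le[OF norm_step_le] delta_nonneg e_nonneg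
    by (intro add_mono mult_left_mono) auto
  also have "\<dots> = (\<delta> ^ Suc k + e * (\<Sum>j=1..<Suc k. \<delta> ^ j)) * norm x"
    unfolding sum_power_from_one_Suc[OF step.hyps(1)] by (simp add: algebra_simps)
  finally show ?case .
qed

lemma norm_P_iterate_diff:
  assumes "1 \<le> k"
  shows "norm (P (blpow (M o\<^sub>L T) k x) - blpow (P o\<^sub>L T o\<^sub>L P) k x)
    \<le> (e + e * (1 + e * (real k - 1)) * (\<Sum>j=1..<k. \<delta> ^ j)) * norm x"
  using assms
proof (induction k rule: dec_induct)
  case base
  show ?case
    using P_step[of x] norm_P_T_complement_apply[of x] by simp
next
  case (step k)
  let ?y = "blpow (M o\<^sub>L T) k x" and ?z = "blpow (P o\<^sub>L T o\<^sub>L P) k x"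
    and ?s = "\<Sum>j=1..<k. \<delta> ^ j"
  \<comment> \<open>\<open>y - P y = (1 - P) (y - P y)\<close> lets the off-diagonal bound act on \<open>y - P y\<close>\<close>
  have "P (blpow (M o\<^sub>L T) (Suc k) x) - blpow (P o\<^sub>L T o\<^sub>L P) (Suc k) x
      = (P o\<^sub>L T o\<^sub>L P) (P ?y - ?z) + P (T ((?y - P ?y) - P (?y - P ?y)))"
    using P_step[of ?y] by (simp add: blinfun.diff_right)
  also have "norm \<dots> \<le> 1 * norm (P ?y - ?z) + e * norm (?y - P ?y)"
    by (intro norm_triangle_le add_mono norm_blinfun_apply_le_mult norm_compressed_le
        order_refl norm_P_T_complement_apply)
  also have "\<dots> \<le> (e + e * (1 + e * (real k - 1)) * ?s) * norm x
      + e * ((\<delta> ^ k + e * ?s) * norm x)"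
    using step.IH norm_complement_iterate[OF step.hyps(1)] e_nonneg
    by (intro add_mono mult_left_mono) auto
  also have "\<dots> \<le> (e + e * (1 + e * (real (Suc k) - 1)) * (\<Sum>j=1..<Suc k. \<delta> ^ j)) * norm x"
  proof -
    have "0 \<le> e * e * real k * \<delta> ^ k * norm x"
      using e_nonneg delta_nonneg by simp
    then show ?thesis
      using step.hyps(1) by (simp add: algebra_simps)
  qed
  finally show ?case .
qed

lemma norm_iterate_diff:
  assumes "1 \<le> k"
  shows "norm (blpow (M o\<^sub>L T) k x - blpow (P o\<^sub>L T o\<^sub>L P) k x)
    \<le> (\<delta> ^ k + e + e * (2 + e * (real k - 1)) * (\<Sum>j=1..<k. \<delta> ^ j)) * norm x"
proof -
  let ?y = "blpow (M o\<^sub>L T) k x"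
  have "norm (?y - blpow (P o\<^sub>L T o\<^sub>L P) k x)
      \<le> norm (?y - P ?y) + norm (P ?y - blpow (P o\<^sub>L T o\<^sub>L P) k x)"
    using norm_triangle_ineq[of "?y - P ?y" "P ?y - blpow (P o\<^sub>L T o\<^sub>L P) k x"] by simp
  also have "\<dots> \<le> (\<delta> ^ k + e * (\<Sum>j=1..<k. \<delta> ^ j)) * norm x
      + (e + e * (1 + e * (real k - 1)) * (\<Sum>j=1..<k. \<delta> ^ j)) * norm x"
    using assms by (intro add_mono norm_complement_iterate norm_P_iterate_diff)
  finally show ?thesis
    by (simp add: algebra_simps)
qed

end

theorem lemma5p2:
  fixes T :: "real \<Rightarrow> ('a::banach \<Rightarrow>\<^sub>L 'a)"
    and D :: "'a set" and L :: "'a \<Rightarrow> 'a"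
    and M P :: "'a \<Rightarrow>\<^sub>L 'a"
    and \<delta> b :: real
  assumes sg: "C0_contraction_semigroup T"
    and gen: "is_generator T D L"
    and M_contr: "norm M \<le> 1"
    and P_proj: "P o\<^sub>L P = P"
    and \<delta>: "0 < \<delta>" "\<delta> < 1"
    and conv: "\<forall>n\<ge>1. norm (blpow M n - P) \<le> \<delta> ^ n"
    and b: "b \<ge> 0"
    and b1: "\<forall>t\<ge>0. norm (P o\<^sub>L T t o\<^sub>L (id_blinfun - P)) \<le> t * b"
    and b2: "\<forall>t\<ge>0. norm ((id_blinfun - P) o\<^sub>L T t o\<^sub>L P) \<le> t * b"
    and PLP: "\<exists>S. C0_semigroup S \<and> is_generator S {x. P x \<in> D} (\<lambda>x. P (L (P x)))"
  shows "\<forall>n\<ge>1. \<forall>x.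
    norm (blpow (M o\<^sub>L T (1 / real n)) n x - blpow (P o\<^sub>L T (1 / real n) o\<^sub>L P) n x)
      \<le> (\<delta> ^ n + b / real n
          + (1 / real n) * (b * (2 + b) * (\<delta> - \<delta> ^ n) / (1 - \<delta>)) * exp (2 * b)) * norm x"
proof (intro allI impI)
  fix n :: nat and x :: 'a
  assume n: "1 \<le> n"
  have lim: "blpow M \<longlonglongrightarrow> P"
    using conv \<delta>(2) by (intro blpow_tendsto_of_geometric) auto
  have "norm (M - P) \<le> \<delta>"
    using conv[rule_format, of 1] unfolding blpow_one by simp
  interpret zeno_step M P "T (1 / real n)" \<delta> "b / real n"
    using P_proj blpow_limit_absorbs[OF lim] norm_blpow_limit_le[OF lim M_contr] M_contr
      \<open>norm (M - P) \<le> \<delta>\<close> sg b1[rule_format, of "1 / real n"] b2[rule_format, of "1 / real n"]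
    by unfold_locales (auto simp: C0_contraction_semigroup_def)
  let ?s = "\<Sum>j=1..<n. \<delta> ^ j"
  have "b / real n * (real n - 1) \<le> b"
    using n b by (simp add: field_simps)
  moreover have "2 + b \<le> (2 + b) * exp (2 * b)"
    using b by simp
  ultimately have "2 + b / real n * (real n - 1) \<le> (2 + b) * exp (2 * b)"
    by linarith
  then have "b / real n * (2 + b / real n * (real n - 1)) * ?s
      \<le> b / real n * ((2 + b) * exp (2 * b)) * ?s"
    using b \<delta> by (intro mult_right_mono mult_left_mono sum_nonneg) auto
  also have "\<dots> = (1 / real n) * (b * (2 + b) * (\<delta> - \<delta> ^ n) / (1 - \<delta>)) * exp (2 * b)"
    using \<delta> n by (subst sum_power_from_one_closed_form) auto
  finally show "norm (blpow (M o\<^sub>L T (1 / real n)) n x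
      - blpow (P o\<^sub>L T (1 / real n) o\<^sub>L P) n x)
    \<le> (\<delta> ^ n + b / real n
        + (1 / real n) * (b * (2 + b) * (\<delta> - \<delta> ^ n) / (1 - \<delta>)) * exp (2 * b)) * norm x"
    by (intro order_trans[OF norm_iterate_diff[OF n]] mult_right_mono) auto
qed

end
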